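(* Let $q=2v+1$ be a prime power with $v$ odd. The maximum number of pairwise inequivalent $(\mathbb F_q^\Box,3)$ Heffter rulers equals the maximum $n$ for which there exists an $(\mathbb F_q^\Box,3;n)$ Heffter difference packing.
   Context: $\mathbb F_q^\Box$ denotes the multiplicative group of nonzero squares of $\mathbb F_q$. Fix a group isomorphism $\phi:\mathbb F_q^\Box\to\mathbb Z_v$. An $(\mathbb F_q^\Box,k;n)$ Heffter difference packing is a family of $n$ $k$-subsets $B_1,\dots,B_n$ of $\mathbb F_q^\Box$ such that: the multiset of all differences $a-b$, with $(a,b)$ an ordered pair of distinct elements of a common $\phi(B_i)$, over all $i$, has no repeated element of $\mathbb Z_v$; $k$ divides $v$ and the elements of each $\phi(B_i)$ are pairwise distinct modulo $k$; each $B_i$ sums to $0$ in $\mathbb F_q$. An $(\mathbb F_q^\Box,k)$ Heffter ruler is a $k$-subset $B$ such that $\{B\}$ is an $(\mathbb F_q^\Box,k;1)$ Heffter difference packing. Two Heffter rulers $A,B$ are equivalent if $At=B$ for some nonzero $t\in\mathbb F_q$, where $At=\{at:a\in A\}$. *)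

theory Defs
  imports Main "HOL-Library.Multiset" "HOL-Computational_Algebra.Primes" "HOL-Library.Cardinality"
begin

definition nonzero_squares :: "'a::field set" where
  "nonzero_squares = {x ^ 2 | x. x \<noteq> 0}"

text \<open>phi is a group isomorphism from the nonzero squares onto Z_v,
  Z_v being represented by the integers 0..v-1 with addition mod v.\<close>
definition sq_iso :: "('a::field \<Rightarrow> int) \<Rightarrow> nat \<Rightarrow> bool" where
  "sq_iso phi v \<longleftrightarrow>
     bij_betw phi nonzero_squares {0..<int v} \<and>
     (\<forall>x\<in>nonzero_squares. \<forall>y\<in>nonzero_squares.
        phi (x * y) = (phi x + phi y) mod int v)"

definition diff_mset :: "('a \<Rightarrow> int) \<Rightarrow> nat \<Rightarrow> 'a set \<Rightarrow> int multiset" where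
  "diff_mset phi v B =
     image_mset (\<lambda>(a, b). (a - b) mod int v)
       (mset_set {(a, b). a \<in> phi ` B \<and> b \<in> phi ` B \<and> a \<noteq> b})"

definition heffter_diff_packing ::
  "('a::field \<Rightarrow> int) \<Rightarrow> nat \<Rightarrow> nat \<Rightarrow> nat \<Rightarrow> (nat \<Rightarrow> 'a set) \<Rightarrow> bool" where
  "heffter_diff_packing phi v k n B \<longleftrightarrow>
     (\<forall>i<n. B i \<subseteq> nonzero_squares \<and> finite (B i) \<and> card (B i) = k) \<and>
     (\<forall>d. count (\<Sum>i<n. diff_mset phi v (B i)) d \<le> 1) \<and>
     k dvd v \<and>
     (\<forall>i<n. \<forall>x\<in>phi ` B i. \<forall>y\<in>phi ` B i. x \<noteq> y \<longrightarrow> x mod int k \<noteq> y mod int k) \<and>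
     (\<forall>i<n. \<Sum>(B i) = 0)"

definition heffter_ruler :: "('a::field \<Rightarrow> int) \<Rightarrow> nat \<Rightarrow> nat \<Rightarrow> 'a set \<Rightarrow> bool" where
  "heffter_ruler phi v k B \<longleftrightarrow> heffter_diff_packing phi v k 1 (\<lambda>_. B)"

definition ruler_equiv :: "'a::field set \<Rightarrow> 'a set \<Rightarrow> bool" where
  "ruler_equiv A B \<longleftrightarrow> (\<exists>t. t \<noteq> 0 \<and> (\<lambda>a. a * t) ` A = B)"

end

(* The isomorphism phi turns quotients of nonzero squares into differences in Z_v, so two pairs
   of squares have the same phi-difference exactly when one pair is a multiple of the other by a
   square t.  A triple with zero sum is determined by any two of its elements, hence two zero-sum
   triples of squares share a difference exactly when one is a multiple of the other, i.e. when
   they are equivalent rulers.  A Heffter difference packing is therefore the same thing as a family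
   of pairwise inequivalent Heffter rulers, and both sets of sizes coincide (if 3 does not divide v,
   both suprema are 0). *)

theory Submission
  imports Defs
begin

lemma nonzero_squares_nonzero: "x \<in> nonzero_squares \<Longrightarrow> (x::'a::field) \<noteq> 0"
  unfolding nonzero_squares_def by auto

lemma nonzero_squares_mult:
  assumes "x \<in> nonzero_squares" "y \<in> nonzero_squares"
  shows "(x::'a::field) * y \<in> nonzero_squares"
proof -
  obtain a b :: 'a where "a \<noteq> 0" "b \<noteq> 0" "x = a\<^sup>2" "y = b\<^sup>2"
    using assms unfolding nonzero_squares_def by blast
  then have "x * y = (a * b)\<^sup>2" "a * b \<noteq> 0" by (simp_all add: power_mult_distrib)
  then show ?thesis unfolding nonzero_squares_def by blast
qed

lemma nonzero_squares_divide:
  assumes "x \<in> nonzero_squares" "y \<in> nonzero_squares"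
  shows "(x::'a::field) / y \<in> nonzero_squares"
proof -
  obtain a b :: 'a where "a \<noteq> 0" "b \<noteq> 0" "x = a\<^sup>2" "y = b\<^sup>2"
    using assms unfolding nonzero_squares_def by blast
  then have "x / y = (a / b)\<^sup>2" "a / b \<noteq> 0" by (simp_all add: power_divide)
  then show ?thesis unfolding nonzero_squares_def by blast
qed

lemma sq_iso_inj_on: "sq_iso phi v \<Longrightarrow> inj_on phi nonzero_squares"
  unfolding sq_iso_def bij_betw_def by blast

lemma sq_iso_range: "sq_iso phi v \<Longrightarrow> x \<in> nonzero_squares \<Longrightarrow> phi x \<in> {0..<int v}"
  unfolding sq_iso_def bij_betw_def by blast

lemma sq_iso_mult:
  "sq_iso phi v \<Longrightarrow> x \<in> nonzero_squares \<Longrightarrow> y \<in> nonzero_squares \<Longrightarrow>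
     phi (x * y) = (phi x + phi y) mod int v"
  unfolding sq_iso_def by blast

lemma sq_iso_divide:
  fixes phi :: "'a::field \<Rightarrow> int"
  assumes iso: "sq_iso phi v" and x: "x \<in> nonzero_squares" and y: "y \<in> nonzero_squares"
  shows "phi (x / y) = (phi x - phi y) mod int v"
proof -
  have xy: "x / y \<in> nonzero_squares" using nonzero_squares_divide[OF x y] .
  have "phi x = phi (x / y * y)" using nonzero_squares_nonzero[OF y] by simp
  also have "\<dots> = (phi (x / y) + phi y) mod int v" using sq_iso_mult[OF iso xy y] .
  finally have "(phi x - phi y) mod int v = phi (x / y) mod int v"
    by (metis add_diff_cancel_right' mod_diff_left_eq)
  then show ?thesis using sq_iso_range[OF iso xy] by simp
qed

lemma sq_iso_diff_eq_iff:
  fixes phi :: "'a::field \<Rightarrow> int"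
  assumes iso: "sq_iso phi v"
    and "x \<in> nonzero_squares" "y \<in> nonzero_squares" "x' \<in> nonzero_squares" "y' \<in> nonzero_squares"
  shows "(phi x - phi y) mod int v = (phi x' - phi y') mod int v \<longleftrightarrow> x / x' = y / y'"
proof -
  have "(phi x - phi y) mod int v = (phi x' - phi y') mod int v \<longleftrightarrow>
        (phi x - phi x') mod int v = (phi y - phi y') mod int v"
    unfolding mod_eq_dvd_iff by (simp add: algebra_simps)
  also have "\<dots> \<longleftrightarrow> phi (x / x') = phi (y / y')"
    using assms by (simp add: sq_iso_divide)
  also have "\<dots> \<longleftrightarrow> x / x' = y / y'"
    using assms by (simp add: inj_on_eq_iff[OF sq_iso_inj_on[OF iso]] nonzero_squares_divide)
  finally show ?thesis .
qed

lemma in_diff_mset_iff: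
  fixes phi :: "'a::field \<Rightarrow> int"
  assumes iso: "sq_iso phi v" and B: "B \<subseteq> nonzero_squares" "finite B"
  shows "d \<in># diff_mset phi v B \<longleftrightarrow> (\<exists>a\<in>B. \<exists>b\<in>B. a \<noteq> b \<and> d = (phi a - phi b) mod int v)"
proof -
  have "finite {(a, b). a \<in> phi ` B \<and> b \<in> phi ` B \<and> a \<noteq> b}"
    by (rule finite_subset[of _ "phi ` B \<times> phi ` B"]) (use B in auto)
  then have "d \<in># diff_mset phi v B \<longleftrightarrow>
      (\<exists>a\<in>B. \<exists>b\<in>B. phi a \<noteq> phi b \<and> d = (phi a - phi b) mod int v)"
    unfolding diff_mset_def by auto
  moreover have "phi a \<noteq> phi b \<longleftrightarrow> a \<noteq> b" if "a \<in> B" "b \<in> B" for a b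
    using that B inj_on_eq_iff[OF sq_iso_inj_on[OF iso]] by blast
  ultimately show ?thesis by blast
qed

lemma set_mset_diff_mset_scale:
  fixes phi :: "'a::field \<Rightarrow> int"
  assumes iso: "sq_iso phi v" and A: "A \<subseteq> nonzero_squares" "finite A"
    and t: "t \<in> nonzero_squares"
  shows "set_mset (diff_mset phi v ((\<lambda>x. x * t) ` A)) = set_mset (diff_mset phi v A)"
proof -
  have At: "(\<lambda>x. x * t) ` A \<subseteq> nonzero_squares"
    using A t nonzero_squares_mult by blast
  have "(phi (a * t) - phi (b * t)) mod int v = (phi a - phi b) mod int v"
    if "a \<in> A" "b \<in> A" for a b
    using that A t sq_iso_diff_eq_iff[OF iso, of "a * t" "b * t" a b]
    by (auto simp: nonzero_squares_mult nonzero_squares_nonzero)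
  moreover have "a * t \<noteq> b * t \<longleftrightarrow> a \<noteq> b" for a b
    using nonzero_squares_nonzero[OF t] by simp
  ultimately show ?thesis
    using in_diff_mset_iff[OF iso At] in_diff_mset_iff[OF iso A] A(2)
    by (auto simp: set_eq_iff)
qed

lemma zero_sum_triple_eq:
  fixes a b :: "'a::comm_ring_1"
  assumes "card A = 3" "\<Sum>A = 0" "a \<in> A" "b \<in> A" "a \<noteq> b"
  shows "A = {a, b, -(a + b)}"
proof -
  have "card (A - {a, b}) = 1"
    using assms by (simp add: card_Diff_subset card.infinite)
  then obtain c where c: "A - {a, b} = {c}" by (meson card_1_singletonE)
  then have A: "A = {a, b, c}" and "c \<noteq> a" "c \<noteq> b" using assms by auto
  then have "(a + b) + c = 0" using assms(2,5) by (simp add: add.assoc)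
  then have "c = -(a + b)" by (rule minus_unique[symmetric])
  then show ?thesis using A by simp
qed

lemma scale_zero_sum_triple:
  fixes t :: "'a::comm_ring_1"
  assumes A: "card A = 3" "\<Sum>A = 0" "a \<in> A" "b \<in> A" "a \<noteq> b"
    and B: "card B = 3" "\<Sum>B = 0" "a' \<in> B" "b' \<in> B" "a' \<noteq> b'"
    and "a' * t = a" "b' * t = b"
  shows "(\<lambda>x. x * t) ` B = A"
  using zero_sum_triple_eq[OF A] zero_sum_triple_eq[OF B] assms(11,12)
  by (simp add: left_diff_distrib)

lemma zero_sum_triples_share_diff_iff_equiv:
  fixes phi :: "'a::field \<Rightarrow> int"
  assumes iso: "sq_iso phi v"
    and A: "A \<subseteq> nonzero_squares" "card A = 3" "\<Sum>A = 0"
    and B: "B \<subseteq> nonzero_squares" "card B = 3" "\<Sum>B = 0"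
  shows "\<not> disjnt (set_mset (diff_mset phi v A)) (set_mset (diff_mset phi v B)) \<longleftrightarrow> ruler_equiv A B"
proof
  have fin: "finite A" "finite B" using A(2) B(2) by (auto intro: card_ge_0_finite)
  assume "\<not> disjnt (set_mset (diff_mset phi v A)) (set_mset (diff_mset phi v B))"
  then obtain d where dA: "d \<in># diff_mset phi v A" and dB: "d \<in># diff_mset phi v B"
    unfolding disjnt_iff by blast
  obtain a b where ab: "a \<in> A" "b \<in> A" "a \<noteq> b" and d: "d = (phi a - phi b) mod int v"
    using dA in_diff_mset_iff[OF iso A(1) fin(1)] by blast
  obtain a' b' where ab': "a' \<in> B" "b' \<in> B" "a' \<noteq> b'" and d': "d = (phi a' - phi b') mod int v"
    using dB in_diff_mset_iff[OF iso B(1) fin(2)] by blast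
  have t: "a' / a = b' / b"
    using d d' ab ab' A(1) B(1) sq_iso_diff_eq_iff[OF iso, of a' b' a b] by auto
  have "a \<noteq> 0" "b \<noteq> 0" using ab A(1) nonzero_squares_nonzero by blast+
  then have "a * (a' / a) = a'" "b * (a' / a) = b'" by (simp, simp add: t)
  then have "(\<lambda>x. x * (a' / a)) ` A = B"
    using scale_zero_sum_triple[OF B(2,3) ab' A(2,3) ab] by blast
  moreover have "a' / a \<noteq> 0"
    using ab(1) ab'(1) A(1) B(1) nonzero_squares_nonzero by (metis divide_eq_0_iff subsetD)
  ultimately show "ruler_equiv A B" unfolding ruler_equiv_def by blast
next
  have fin: "finite A" using A(2) by (auto intro: card_ge_0_finite)
  obtain a b where ab: "a \<in> A" "b \<in> A" "a \<noteq> b"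
    using A(2) unfolding card_3_iff by blast
  assume "ruler_equiv A B"
  then obtain t where t: "t \<noteq> 0" "(\<lambda>x. x * t) ` A = B" unfolding ruler_equiv_def by blast
  have "a * t / a \<in> nonzero_squares"
    using ab(1) A(1) B(1) t(2) by (blast intro: nonzero_squares_divide)
  then have "t \<in> nonzero_squares" using ab(1) A(1) by (auto simp: nonzero_squares_nonzero)
  then have "set_mset (diff_mset phi v B) = set_mset (diff_mset phi v A)"
    unfolding t(2)[symmetric] by (rule set_mset_diff_mset_scale[OF iso A(1) fin])
  moreover have "(phi a - phi b) mod int v \<in># diff_mset phi v A"
    using in_diff_mset_iff[OF iso A(1) fin] ab by blast
  ultimately show "\<not> disjnt (set_mset (diff_mset phi v A)) (set_mset (diff_mset phi v B))"
    by (auto simp: disjnt_iff)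
qed

lemma sum_nat_le_1_iff:
  fixes f :: "'b \<Rightarrow> nat"
  assumes "finite I"
  shows "sum f I \<le> 1 \<longleftrightarrow> (\<forall>i\<in>I. f i \<le> 1) \<and> (\<forall>i\<in>I. \<forall>j\<in>I. i \<noteq> j \<longrightarrow> f i = 0 \<or> f j = 0)"
proof
  assume le: "sum f I \<le> 1"
  have "f i \<le> 1" if "i \<in> I" for i
    using member_le_sum[of i I f] that assms le by simp
  moreover have "f i = 0 \<or> f j = 0" if "i \<in> I" "j \<in> I" "i \<noteq> j" for i j
  proof -
    have "f i + f j = sum f {i, j}" using that(3) by simp
    also have "\<dots> \<le> sum f I" using that by (intro sum_mono2[OF assms]) auto
    finally show ?thesis using le by linarith
  qed
  ultimately show "(\<forall>i\<in>I. f i \<le> 1) \<and> (\<forall>i\<in>I. \<forall>j\<in>I. i \<noteq> j \<longrightarrow> f i = 0 \<or> f j = 0)"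
    by auto
next
  assume H: "(\<forall>i\<in>I. f i \<le> 1) \<and> (\<forall>i\<in>I. \<forall>j\<in>I. i \<noteq> j \<longrightarrow> f i = 0 \<or> f j = 0)"
  note le1 = H[THEN conjunct1] and excl = H[THEN conjunct2]
  show "sum f I \<le> 1"
  proof (cases "\<exists>i\<in>I. f i \<noteq> 0")
    case True
    then obtain i where i: "i \<in> I" "f i \<noteq> 0" by blast
    have "f j = 0" if "j \<in> I - {i}" for j
      using excl i that by auto
    then have "sum f (I - {i}) = 0" by simp
    then show ?thesis using sum.remove[OF assms i(1), of f] le1 i(1) by simp
  next
    case False
    then show ?thesis by simp
  qed
qed

lemma count_sum_le_1_iff:
  assumes "finite I"
  shows "(\<forall>d. count (\<Sum>i\<in>I. M i) d \<le> 1) \<longleftrightarrow>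
    (\<forall>i\<in>I. \<forall>d. count (M i) d \<le> 1) \<and>
    (\<forall>i\<in>I. \<forall>j\<in>I. i \<noteq> j \<longrightarrow> disjnt (set_mset (M i)) (set_mset (M j)))"
proof -
  have iff: "count (\<Sum>i\<in>I. M i) d \<le> 1 \<longleftrightarrow> (\<forall>i\<in>I. count (M i) d \<le> 1) \<and>
      (\<forall>i\<in>I. \<forall>j\<in>I. i \<noteq> j \<longrightarrow> d \<notin># M i \<or> d \<notin># M j)" for d
    unfolding count_sum sum_nat_le_1_iff[OF assms] by (simp add: count_eq_zero_iff)
  show ?thesis unfolding iff disjnt_iff by blast
qed

lemma heffter_diff_packing_iff:
  "heffter_diff_packing phi v k n B \<longleftrightarrow>
     k dvd v \<and> (\<forall>i<n. heffter_ruler phi v k (B i)) \<and>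
     (\<forall>i<n. \<forall>j<n. i \<noteq> j \<longrightarrow>
        disjnt (set_mset (diff_mset phi v (B i))) (set_mset (diff_mset phi v (B j))))"
proof -
  have ruler: "heffter_ruler phi v k A \<longleftrightarrow>
      (A \<subseteq> nonzero_squares \<and> finite A \<and> card A = k) \<and> (\<forall>d. count (diff_mset phi v A) d \<le> 1) \<and>
      k dvd v \<and> (\<forall>x\<in>phi ` A. \<forall>y\<in>phi ` A. x \<noteq> y \<longrightarrow> x mod int k \<noteq> y mod int k) \<and>
      \<Sum>A = 0" for A
    by (simp add: heffter_ruler_def heffter_diff_packing_def)
  show ?thesis
    unfolding heffter_diff_packing_def count_sum_le_1_iff[OF finite_lessThan] ruler
    by auto
qed

lemma heffter_diff_packing_3_iff:
  fixes phi :: "'a::field \<Rightarrow> int"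
  assumes iso: "sq_iso phi v"
  shows "heffter_diff_packing phi v 3 n B \<longleftrightarrow>
    3 dvd v \<and> (\<forall>i<n. heffter_ruler phi v 3 (B i)) \<and>
    (\<forall>i<n. \<forall>j<n. i \<noteq> j \<longrightarrow> \<not> ruler_equiv (B i) (B j))"
proof -
  have triple: "A \<subseteq> nonzero_squares \<and> card A = 3 \<and> \<Sum>A = 0" if "heffter_ruler phi v 3 A" for A
    using that by (simp add: heffter_ruler_def heffter_diff_packing_def)
  have disjnt_iff_inequivalent:
    "disjnt (set_mset (diff_mset phi v A)) (set_mset (diff_mset phi v A')) \<longleftrightarrow> \<not> ruler_equiv A A'"
    if "heffter_ruler phi v 3 A" "heffter_ruler phi v 3 A'" for A A'
    using zero_sum_triples_share_diff_iff_equiv[OF iso] triple[OF that(1)] triple[OF that(2)]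
    by auto
  show ?thesis
    by (auto simp: heffter_diff_packing_iff disjnt_iff_inequivalent)
qed

lemma card_pairwise_sets_eq_family_lengths:
  assumes refl: "\<And>A. P A \<Longrightarrow> Q A A"
  shows "{card R | R. (\<forall>A\<in>R. P A) \<and> (\<forall>A\<in>R. \<forall>B\<in>R. A \<noteq> B \<longrightarrow> \<not> Q A B)} =
    {n. \<exists>B. (\<forall>i<n. P (B i)) \<and> (\<forall>i<n. \<forall>j<n. i \<noteq> j \<longrightarrow> \<not> Q (B i) (B j))}"
proof (intro equalityI subsetI)
  fix n :: nat assume "n \<in> {card R | R. (\<forall>A\<in>R. P A) \<and> (\<forall>A\<in>R. \<forall>B\<in>R. A \<noteq> B \<longrightarrow> \<not> Q A B)}"
  then obtain R where R: "n = card R" "\<forall>A\<in>R. P A" "\<forall>A\<in>R. \<forall>B\<in>R. A \<noteq> B \<longrightarrow> \<not> Q A B"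
    by blast
  show "n \<in> {n. \<exists>B. (\<forall>i<n. P (B i)) \<and> (\<forall>i<n. \<forall>j<n. i \<noteq> j \<longrightarrow> \<not> Q (B i) (B j))}"
  proof (cases "finite R")
    case True
    then obtain h where h: "bij_betw h {..<n} R"
      using R(1) ex_bij_betw_nat_finite lessThan_atLeast0 by metis
    have "h i \<in> R" if "i < n" for i
      using bij_betw_apply[OF h] that by simp
    moreover have "h i \<noteq> h j" if "i < n" "j < n" "i \<noteq> j" for i j
      using inj_onD[OF bij_betw_imp_inj_on[OF h]] that by auto
    ultimately show ?thesis using R(2,3) by blast
  qed (use R(1) in simp) \<comment> \<open>an infinite \<open>R\<close> has \<open>card R = 0\<close>: the empty family\<close>
next
  fix n :: nat assume "n \<in> {n. \<exists>B. (\<forall>i<n. P (B i)) \<and> (\<forall>i<n. \<forall>j<n. i \<noteq> j \<longrightarrow> \<not> Q (B i) (B j))}"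
  then obtain B where B: "\<forall>i<n. P (B i)" "\<forall>i<n. \<forall>j<n. i \<noteq> j \<longrightarrow> \<not> Q (B i) (B j)"
    by blast
  have "inj_on B {..<n}"
  proof (rule inj_onI)
    fix i j assume "i \<in> {..<n}" "j \<in> {..<n}" "B i = B j"
    then show "i = j" using B refl by (metis lessThan_iff)
  qed
  then have "card (B ` {..<n}) = n" by (simp add: card_image)
  then show "n \<in> {card R | R. (\<forall>A\<in>R. P A) \<and> (\<forall>A\<in>R. \<forall>B\<in>R. A \<noteq> B \<longrightarrow> \<not> Q A B)}"
    using B by (auto intro!: exI[of _ "B ` {..<n}"])
qed

lemma ruler_equiv_refl: "ruler_equiv A A"
  unfolding ruler_equiv_def by (auto intro!: exI[of _ 1])

theorem proposition4p10:
  fixes phi :: "'a::{finite,field} \<Rightarrow> int" and v :: nat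
  assumes "CARD('a) = 2 * v + 1"
    and "\<exists>p m. prime (p::nat) \<and> m > 0 \<and> CARD('a) = p ^ m"
    and "odd v"
    and "sq_iso phi v"
  shows "Sup {card R | R. (\<forall>B\<in>R. heffter_ruler phi v 3 B) \<and>
                         (\<forall>A\<in>R. \<forall>B\<in>R. A \<noteq> B \<longrightarrow> \<not> ruler_equiv A B)}
       = Sup {n. \<exists>B. heffter_diff_packing phi v 3 n B}"
proof (cases "3 dvd v")
  case True
  then show ?thesis
    using card_pairwise_sets_eq_family_lengths[of "heffter_ruler phi v 3" ruler_equiv]
    by (simp add: heffter_diff_packing_3_iff[OF assms(4)] ruler_equiv_refl)
next
  case False
  then have "{card R | R. (\<forall>B\<in>R. heffter_ruler phi v 3 B) \<and>
                         (\<forall>A\<in>R. \<forall>B\<in>R. A \<noteq> B \<longrightarrow> \<not> ruler_equiv A B)} = {0}"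
    by (auto simp: heffter_ruler_def heffter_diff_packing_def intro!: exI[of _ "{}"])
  moreover have "{n. \<exists>B. heffter_diff_packing phi v 3 n B} = {}"
    using False by (simp add: heffter_diff_packing_iff)
  ultimately show ?thesis by simp
qed

end
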